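(* Let $\mathbf{k}$ be an algebraically closed field of characteristic zero, $t\ge2$, and $(n_1,\dots,n_t)$ a dimension vector with $n_1<n_2<\cdots<n_t$. Let $U_i=\mathbf{k}^{n_i}$ and let $Z$ be the variety of tuples $z=(A_1,B_1,\dots,A_{t-1},B_{t-1})$ with $A_i:U_i\to U_{i+1}$, $B_i:U_{i+1}\to U_i$ linear, satisfying $B_1A_1=0$ and $B_{i+1}A_{i+1}=A_iB_i$ for $i=1,\dots,t-2$. Then a point $z\in Z$ belongs to the semistable locus $Z^{ss}$ if and only if $A_1,\dots,A_{t-1}$ are all injective.
   Context: Here $Z^{ss}$ is Nakajima's semistable locus for the action of $H=GL_{n_1}\times\cdots\times GL_{n_{t-1}}$ (acting by $A_i\mapsto h_{i+1}A_ih_i^{-1}$, $B_i\mapsto h_iB_ih_{i+1}^{-1}$, $h_t=\mathrm{id}$) with respect to the character $\chi(h)=\prod_i\det(h_i)^{-1}$; by Nakajima's criterion this is the set of $z\in Z$ such that the only tuple of subspaces $W_i\subseteq U_i$ ($i=1,\dots,t-1$) with $A_i(W_i)\subseteq W_{i+1}$ and $B_i(W_{i+1})\subseteq W_i$ for $i=1,\dots,t-2$ and $A_{t-1}(W_{t-1})=0$ is $W_1=\cdots=W_{t-1}=0$. *)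

theory Defs
  imports "HOL-Computational_Algebra.Polynomial" "Jordan_Normal_Form.Matrix"
begin

text \<open>Linear maps U_i = k^(n i) are represented as matrices; indices are 1-based as in the paper.
  A i : U_i -> U_(i+1) is an n(i+1) x n(i) matrix, B i : U_(i+1) -> U_i an n(i) x n(i+1) matrix.\<close>

definition in_Z :: "nat \<Rightarrow> (nat \<Rightarrow> nat) \<Rightarrow> (nat \<Rightarrow> 'a::field mat) \<Rightarrow> (nat \<Rightarrow> 'a mat) \<Rightarrow> bool" where
  "in_Z t n A B \<longleftrightarrow>
     (\<forall>i\<in>{1..t-1}. A i \<in> carrier_mat (n (i+1)) (n i) \<and> B i \<in> carrier_mat (n i) (n (i+1))) \<and>
     B 1 * A 1 = 0\<^sub>m (n 1) (n 1) \<and>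
     (\<forall>i\<in>{1..t-2}. B (i+1) * A (i+1) = A i * B i)"

definition is_subspace :: "nat \<Rightarrow> 'a::field vec set \<Rightarrow> bool" where
  "is_subspace m W \<longleftrightarrow> W \<subseteq> carrier_vec m \<and> 0\<^sub>v m \<in> W \<and>
     (\<forall>v\<in>W. \<forall>w\<in>W. v + w \<in> W) \<and> (\<forall>c. \<forall>v\<in>W. c \<cdot>\<^sub>v v \<in> W)"

text \<open>Nakajima's semistable locus, via the subspace criterion of the context.\<close>
definition semistable :: "nat \<Rightarrow> (nat \<Rightarrow> nat) \<Rightarrow> (nat \<Rightarrow> 'a::field mat) \<Rightarrow> (nat \<Rightarrow> 'a mat) \<Rightarrow> bool" where
  "semistable t n A B \<longleftrightarrow>
     (\<forall>W :: nat \<Rightarrow> 'a vec set.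
        ((\<forall>i\<in>{1..t-1}. is_subspace (n i) (W i)) \<and>
         (\<forall>i\<in>{1..t-2}. (\<forall>w\<in>W i. A i *\<^sub>v w \<in> W (i+1)) \<and> (\<forall>w\<in>W (i+1). B i *\<^sub>v w \<in> W i)) \<and>
         (\<forall>w\<in>W (t-1). A (t-1) *\<^sub>v w = 0\<^sub>v (n t)))
        \<longrightarrow> (\<forall>i\<in>{1..t-1}. W i = {0\<^sub>v (n i)}))"

end

theory Submission
  imports Defs
begin

text \<open>If every A i is injective, a family W as in the criterion vanishes from the top down:
  W (t-1) lies in the kernel of A (t-1), and A j embeds W j into W (j+1).
  Conversely, a nonzero kernel K of some A i destabilises: take W i = K,
  W j = B j \<dots> B (i-1) K below i and 0 above i. The relation A j B j = B (j+1) A (j+1)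
  rewrites A j W j = A j B j W (j+1) as B (j+1) A (j+1) W (j+1), so A j W j \<subseteq> W (j+1)
  follows by descending induction from A i K = 0.\<close>

lemma mult_mat_vec_zero_vec:
  assumes "M \<in> carrier_mat m k"
  shows "M *\<^sub>v 0\<^sub>v k = (0\<^sub>v m :: 'a::semiring_0 vec)"
  using assms by (intro eq_vecI) (auto simp: row_def)

lemma inj_on_mult_mat_vec_iff:
  assumes M: "(M :: 'a::ring mat) \<in> carrier_mat m k"
  shows "inj_on (\<lambda>v. M *\<^sub>v v) (carrier_vec k) \<longleftrightarrow>
         (\<forall>v\<in>carrier_vec k. M *\<^sub>v v = 0\<^sub>v m \<longrightarrow> v = 0\<^sub>v k)"
proof
  assume "inj_on (\<lambda>v. M *\<^sub>v v) (carrier_vec k)"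
  then show "\<forall>v\<in>carrier_vec k. M *\<^sub>v v = 0\<^sub>v m \<longrightarrow> v = 0\<^sub>v k"
    using mult_mat_vec_zero_vec[OF M] by (metis inj_onD zero_carrier_vec)
next
  assume ker: "\<forall>v\<in>carrier_vec k. M *\<^sub>v v = 0\<^sub>v m \<longrightarrow> v = 0\<^sub>v k"
  show "inj_on (\<lambda>v. M *\<^sub>v v) (carrier_vec k)"
  proof (rule inj_onI)
    fix v w assume v: "v \<in> carrier_vec k" and w: "w \<in> carrier_vec k"
      and eq: "M *\<^sub>v v = M *\<^sub>v w"
    have "M *\<^sub>v (v - w) = 0\<^sub>v m"
      using M v w eq by (simp add: mult_minus_distrib_mat_vec)
    then have "v - w = 0\<^sub>v k"
      using ker v w by simp
    show "v = w"
    proof (rule eq_vecI)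
      fix j assume "j < dim_vec w"
      then have "(v - w) $ j = 0"
        using \<open>v - w = 0\<^sub>v k\<close> w by simp
      then show "v $ j = w $ j"
        using \<open>j < dim_vec w\<close> v w by simp
    qed (use v w in simp)
  qed
qed

lemma is_subspace_zero: "is_subspace m {0\<^sub>v m :: 'a::field vec}"
  unfolding is_subspace_def by auto

lemma is_subspace_image:
  assumes M: "(M :: 'a::field mat) \<in> carrier_mat m k" and W: "is_subspace k W"
  shows "is_subspace m ((\<lambda>w. M *\<^sub>v w) ` W)"
proof -
  have W_carrier: "W \<subseteq> carrier_vec k"
    using W by (simp add: is_subspace_def)
  have "M *\<^sub>v v + M *\<^sub>v w = M *\<^sub>v (v + w)" if "v \<in> W" "w \<in> W" for v w
    using that W_carrier by (simp add: mult_add_distrib_mat_vec[OF M] subsetD)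
  moreover have "c \<cdot>\<^sub>v (M *\<^sub>v v) = M *\<^sub>v (c \<cdot>\<^sub>v v)" if "v \<in> W" for c v
    using that W_carrier by (simp add: mult_mat_vec[OF M] subsetD)
  ultimately show ?thesis
    using W W_carrier M mult_mat_vec_zero_vec[OF M]
    unfolding is_subspace_def by (auto intro!: image_eqI)
qed

lemma is_subspace_kernel:
  assumes M: "(M :: 'a::field mat) \<in> carrier_mat m k"
  shows "is_subspace k {v \<in> carrier_vec k. M *\<^sub>v v = 0\<^sub>v m}"
  using mult_mat_vec_zero_vec[OF M] mult_add_distrib_mat_vec[OF M] mult_mat_vec[OF M]
  unfolding is_subspace_def by auto

lemma subspace_eq_zero_if_inj_image_zero:
  assumes M: "(M :: 'a::field mat) \<in> carrier_mat m k"
    and inj: "inj_on (\<lambda>v. M *\<^sub>v v) (carrier_vec k)"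
    and W: "is_subspace k W" and image: "(\<lambda>w. M *\<^sub>v w) ` W \<subseteq> {0\<^sub>v m}"
  shows "W = {0\<^sub>v k}"
  using W image inj[unfolded inj_on_mult_mat_vec_iff[OF M]]
  unfolding is_subspace_def by blast

lemma image_image_subset_if_commuting:
  assumes A: "A \<in> carrier_mat m k" and B: "B \<in> carrier_mat k m"
    and A': "A' \<in> carrier_mat p m" and B': "B' \<in> carrier_mat m p"
    and comm: "B' * A' = A * B" and V: "V \<subseteq> carrier_vec m"
    and A'_V: "(\<lambda>v. A' *\<^sub>v v) ` V \<subseteq> X" and B'_X: "(\<lambda>x. B' *\<^sub>v x) ` X \<subseteq> Y"
  shows "(\<lambda>w. A *\<^sub>v w) ` (\<lambda>v. B *\<^sub>v v) ` V \<subseteq> (Y :: 'a::semiring_0 vec set)"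
proof clarify
  fix v assume v: "v \<in> V"
  have "A *\<^sub>v (B *\<^sub>v v) = B' *\<^sub>v (A' *\<^sub>v v)"
    using v V A B A' B' by (metis assoc_mult_mat_vec comm subsetD)
  then show "A *\<^sub>v (B *\<^sub>v v) \<in> Y"
    using v A'_V B'_X by blast
qed

function backward_images ::
  "(nat \<Rightarrow> nat) \<Rightarrow> (nat \<Rightarrow> 'a::semiring_0 mat) \<Rightarrow> nat \<Rightarrow> 'a vec set \<Rightarrow> nat \<Rightarrow> 'a vec set"
where
  "backward_images n B i K j =
     (if j < i then (\<lambda>w. B j *\<^sub>v w) ` backward_images n B i K (Suc j)
      else if j = i then K else {0\<^sub>v (n j)})"
  by auto
termination by (relation "measure (\<lambda>(n, B, i, K, j). i - j)") auto

declare backward_images.simps [simp del]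

lemma backward_images_below:
  "j < i \<Longrightarrow> backward_images n B i K j = (\<lambda>w. B j *\<^sub>v w) ` backward_images n B i K (Suc j)"
  by (simp add: backward_images.simps)

lemma backward_images_at [simp]: "backward_images n B i K i = K"
  by (simp add: backward_images.simps)

lemma backward_images_above [simp]: "i < j \<Longrightarrow> backward_images n B i K j = {0\<^sub>v (n j)}"
  by (simp add: backward_images.simps)

context
  fixes t :: nat and n :: "nat \<Rightarrow> nat" and A B :: "nat \<Rightarrow> 'a::field mat"
  assumes Z: "in_Z t n A B"
begin

lemma in_Z_A_carrier: "j \<in> {1..<t} \<Longrightarrow> A j \<in> carrier_mat (n (Suc j)) (n j)"
  using Z unfolding in_Z_def by auto

lemma in_Z_B_carrier: "j \<in> {1..<t} \<Longrightarrow> B j \<in> carrier_mat (n j) (n (Suc j))"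
  using Z unfolding in_Z_def by auto

lemma in_Z_commute: "j \<in> {1..<t-1} \<Longrightarrow> B (Suc j) * A (Suc j) = A j * B j"
  using Z unfolding in_Z_def by auto

context
  fixes i :: nat and K :: "'a vec set"
  assumes i: "i \<in> {1..<t}" and K: "is_subspace (n i) K"
begin

lemma backward_images_subspace:
  assumes j: "j \<in> {1..<t}"
  shows "is_subspace (n j) (backward_images n B i K j)"
proof (cases "i < j")
  case True
  then show ?thesis by (simp add: is_subspace_zero)
next
  case False
  then have "j \<le> i" by simp
  then show ?thesis
  proof (induction rule: inc_induct)
    case (step l)
    then show ?case
      using i j in_Z_B_carrier[of l] by (simp add: backward_images_below is_subspace_image)
  qed (use K in simp)
qed

lemma backward_images_B_subset:
  assumes j: "j \<in> {1..<t}"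
  shows "(\<lambda>w. B j *\<^sub>v w) ` backward_images n B i K (Suc j) \<subseteq> backward_images n B i K j"
proof (cases "j < i")
  case True
  then show ?thesis by (simp add: backward_images_below)
next
  case False
  then show ?thesis
    using backward_images_subspace[OF j] mult_mat_vec_zero_vec[OF in_Z_B_carrier[OF j]]
    by (simp add: is_subspace_def)
qed

lemma backward_images_A_subset:
  assumes K_kernel: "(\<lambda>w. A i *\<^sub>v w) ` K \<subseteq> {0\<^sub>v (n (Suc i))}" and j: "j \<in> {1..<t}"
  shows "(\<lambda>w. A j *\<^sub>v w) ` backward_images n B i K j \<subseteq> backward_images n B i K (Suc j)"
proof (cases "i < j")
  case True
  then show ?thesis
    using backward_images_subspace[OF j] mult_mat_vec_zero_vec[OF in_Z_A_carrier[OF j]] by simp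
next
  case False
  then have "j \<le> i" by simp
  then show ?thesis
  proof (induction rule: inc_induct)
    case base
    then show ?case using K_kernel by simp
  next
    case (step l)
    then have l: "l \<in> {1..<t}" "Suc l \<in> {1..<t}" "l \<in> {1..<t-1}"
      using i j by auto
    show ?case
      unfolding backward_images_below[OF \<open>l < i\<close>]
    proof (rule image_image_subset_if_commuting)
      show "backward_images n B i K (Suc l) \<subseteq> carrier_vec (n (Suc l))"
        using backward_images_subspace[OF l(2)] by (simp add: is_subspace_def)
    qed (use step.IH backward_images_B_subset[OF l(2)] in_Z_commute[OF l(3)]
           in_Z_A_carrier[OF l(1)] in_Z_B_carrier[OF l(1)]
           in_Z_A_carrier[OF l(2)] in_Z_B_carrier[OF l(2)] in auto)
  qed
qed

end

lemma semistable_imp_inj_on: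
  assumes semistable: "semistable t n A B" and i: "i \<in> {1..<t}"
  shows "inj_on (\<lambda>v. A i *\<^sub>v v) (carrier_vec (n i))"
proof (rule ccontr)
  assume "\<not> inj_on (\<lambda>v. A i *\<^sub>v v) (carrier_vec (n i))"
  then obtain v where v: "v \<in> carrier_vec (n i)" "v \<noteq> 0\<^sub>v (n i)" "A i *\<^sub>v v = 0\<^sub>v (n (Suc i))"
    using inj_on_mult_mat_vec_iff[OF in_Z_A_carrier[OF i]] by blast
  define K where "K = {v \<in> carrier_vec (n i). A i *\<^sub>v v = 0\<^sub>v (n (Suc i))}"
  have K: "is_subspace (n i) K"
    unfolding K_def by (rule is_subspace_kernel[OF in_Z_A_carrier[OF i]])
  have K_kernel: "(\<lambda>w. A i *\<^sub>v w) ` K \<subseteq> {0\<^sub>v (n (Suc i))}"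
    unfolding K_def by auto
  let ?W = "backward_images n B i K"
  have "\<forall>j\<in>{1..t-1}. is_subspace (n j) (?W j)"
    using backward_images_subspace[OF i K] by auto
  moreover have "\<forall>j\<in>{1..t-2}. (\<forall>w\<in>?W j. A j *\<^sub>v w \<in> ?W (j+1)) \<and> (\<forall>w\<in>?W (j+1). B j *\<^sub>v w \<in> ?W j)"
    using backward_images_A_subset[OF i K K_kernel] backward_images_B_subset[OF i K]
    by (fastforce simp: image_subset_iff)
  moreover have "\<forall>w\<in>?W (t-1). A (t-1) *\<^sub>v w = 0\<^sub>v (n t)"
  proof -
    have "t - 1 \<in> {1..<t}" "Suc (t - 1) = t" "i < t"
      using i by auto
    then show ?thesis
      using backward_images_A_subset[OF i K K_kernel, of "t - 1"] by auto
  qed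
  ultimately have "\<forall>j\<in>{1..t-1}. ?W j = {0\<^sub>v (n j)}"
    using semistable unfolding semistable_def by blast
  from this[rule_format, of i] have "K = {0\<^sub>v (n i)}"
    using i by fastforce
  then show False
    using v unfolding K_def by auto
qed

lemma inj_on_imp_semistable:
  assumes inj: "\<forall>i\<in>{1..<t}. inj_on (\<lambda>v. A i *\<^sub>v v) (carrier_vec (n i))"
  shows "semistable t n A B"
  unfolding semistable_def
proof (intro allI impI ballI)
  fix W :: "nat \<Rightarrow> 'a vec set" and j
  assume W: "(\<forall>i\<in>{1..t-1}. is_subspace (n i) (W i)) \<and>
    (\<forall>i\<in>{1..t-2}. (\<forall>w\<in>W i. A i *\<^sub>v w \<in> W (i+1)) \<and> (\<forall>w\<in>W (i+1). B i *\<^sub>v w \<in> W i)) \<and>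
    (\<forall>w\<in>W (t-1). A (t-1) *\<^sub>v w = 0\<^sub>v (n t))"
    and j: "j \<in> {1..t-1}"
  have vanishing: "W l = {0\<^sub>v (n l)}"
    if "l \<in> {1..<t}" "(\<lambda>w. A l *\<^sub>v w) ` W l \<subseteq> {0\<^sub>v (n (Suc l))}" for l
    using subspace_eq_zero_if_inj_image_zero[OF in_Z_A_carrier[OF that(1)] _ _ that(2)]
      that(1) inj W by auto
  from j have "j \<le> t - 1" by simp
  then show "W j = {0\<^sub>v (n j)}"
  proof (induction rule: inc_induct)
    case base
    have "t - 1 \<in> {1..<t}" "Suc (t - 1) = t"
      using j by auto
    moreover have "(\<lambda>w. A (t - 1) *\<^sub>v w) ` W (t - 1) \<subseteq> {0\<^sub>v (n t)}"
      using W by auto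
    ultimately show ?case
      using vanishing[of "t - 1"] by simp
  next
    case (step l)
    then have "l \<in> {1..t-2}"
      using j by auto
    then have "(\<lambda>w. A l *\<^sub>v w) ` W l \<subseteq> W (Suc l)"
      using W by auto
    then show ?case
      using vanishing[of l] step j by simp
  qed
qed

end

theorem proposition3:
  fixes t :: nat and n :: "nat \<Rightarrow> nat"
    and A B :: "nat \<Rightarrow> 'a::{alg_closed_field, field_char_0} mat"
  assumes "t \<ge> 2"
    and "\<forall>i\<in>{1..<t}. n i < n (i+1)"
    and "in_Z t n A B"
  shows "semistable t n A B \<longleftrightarrow>
         (\<forall>i\<in>{1..t-1}. inj_on (\<lambda>v. A i *\<^sub>v v) (carrier_vec (n i)))"
proof -
  have "{1..t-1} = {1..<t}" by auto
  then show ?thesis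
    using semistable_imp_inj_on[OF assms(3)] inj_on_imp_semistable[OF assms(3)] by auto
qed

end
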